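(* For $c>0$ let $\mathfrak{C}_c$ be the catenoid of parameter $c$ described in the context and let $\Gamma_c=\mathfrak{C}_c\cap\{x_3=0\}$. Then, as $c\to+\infty$, $\Gamma_c$ converges uniformly to the origin, i.e. $\sup_{(x_1,x_2,0)\in\Gamma_c}\sqrt{x_1^2+x_2^2}\to0$.
   Context: $\widetilde{E(2)}$ is $\mathbb{R}^3$ with coordinates $(x_1,x_2,x_3)$ and group law $(a_1,b_1,c_1)*(a_2,b_2,c_2)=(a_1+a_2\cos c_1-b_2\sin c_1,\ b_1+a_2\sin c_1+b_2\cos c_1,\ c_1+c_2)$, with the left-invariant metric $\lambda_1^2(\cos x_3\,dx_1+\sin x_3\,dx_2)^2+\lambda_2^2(-\sin x_3\,dx_1+\cos x_3\,dx_2)^2+\frac{1}{\lambda_1^2\lambda_2^2}dx_3^2$, where either $\lambda_1>\lambda_2>0$ or $\lambda_1=\lambda_2=1$. For $c>0$: $\theta_c^+=\pi$ if $c>\sqrt2\lambda_1$, $\theta_c^+=\arccos(1-c^2/\lambda_1^2)$ if $0<c\le\sqrt2\lambda_1$; $\Omega=\{(c,\theta):c>0,\ |\theta|<\theta_c^+\}$. For $(c,\theta)\in\Omega$: $D=\sin\theta/c$; $\varphi$ is the global solution of $\varphi'(u)=\sqrt{c^2+2\cos\theta\,B(u)-D^2B(u)^2}$, $\varphi(0)=0$, with $B(u)=\lambda_1^2\cos^2\varphi(u)+\lambda_2^2\sin^2\varphi(u)$; $U>0$ is the unique number with $\varphi(U)=\pi$; $f$ solves $f'=DB$, $f(0)=0$;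 $G(u)=\int_0^u\frac{c-\varphi'(s)}{B(s)}ds$; $H(c,\theta)=Df(U)+cG(U)$; $\widetilde{\theta_c}$ is the unique $\theta\in(0,\pi/2)\cap(0,\theta_c^+)$ with $H(c,\theta)=0$. The catenoid $\mathfrak{C}_c$ is the image of $X=(x_1,x_2,x_3):\mathbb{C}\to\widetilde{E(2)}$ built with $\theta=\widetilde{\theta_c}$: $x_3(u+iv)=-\lambda_1\lambda_2Dv+\lambda_1\lambda_2G(u)$; with $A=f(u)+cv$, $M_1=c\cos x_3\cosh A-\lambda_1\lambda_2D\sin x_3\sinh A$, $M_2=c\cos x_3\sinh A-\lambda_1\lambda_2D\sin x_3\cosh A$, $M_3=c\sin x_3\sinh A+\lambda_1\lambda_2D\cos x_3\cosh A$, $M_4=c\sin x_3\cosh A+\lambda_1\lambda_2D\cos x_3\sinh A$, $x_1=-\frac{1}{(c^2+\lambda_1^2\lambda_2^2D^2)B}[\frac{1}{\lambda_1}f'\cos\varphi\,M_1-\frac{1}{\lambda_1}(c-\varphi')\sin\varphi\,M_2-\frac{1}{\lambda_2}(c-\varphi')\cos\varphi\,M_3-\frac{1}{\lambda_2}f'\sin\varphi\,M_4]$, $x_2=-\frac{1}{(c^2+\lambda_1^2\lambda_2^2D^2)B}[\frac{1}{\lambda_1}f'\cos\varphi\,M_4-\frac{1}{\lambda_1}(c-\varphi')\sin\varphi\,M_3+\frac{1}{\lambda_2}(c-\varphi')\cos\varphi\,M_2+\frac{1}{\lambda_2}f'\sin\varphi\,M_1]$ (functions of $u$ evaluated at $u$).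 *)

theory Defs
  imports "HOL-Analysis.Analysis"
begin

text \<open>Parameters l1 = lambda_1, l2 = lambda_2 of the left-invariant metric on the
universal cover of E(2). Points of the group are triples (x1, x2, x3).\<close>

definition theta_plus :: "real \<Rightarrow> real \<Rightarrow> real" where
  "theta_plus l1 c = (if c > sqrt 2 * l1 then pi else arccos (1 - c\<^sup>2 / l1\<^sup>2))"

definition in_Omega :: "real \<Rightarrow> real \<Rightarrow> real \<Rightarrow> bool" where
  "in_Omega l1 c \<theta> \<longleftrightarrow> c > 0 \<and> \<bar>\<theta>\<bar> < theta_plus l1 c"

definition Dc :: "real \<Rightarrow> real \<Rightarrow> real" where
  "Dc c \<theta> = sin \<theta> / c"

definition Bval :: "real \<Rightarrow> real \<Rightarrow> real \<Rightarrow> real" where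
  "Bval l1 l2 p = l1\<^sup>2 * (cos p)\<^sup>2 + l2\<^sup>2 * (sin p)\<^sup>2"

definition phi_rhs :: "real \<Rightarrow> real \<Rightarrow> real \<Rightarrow> real \<Rightarrow> real \<Rightarrow> real" where
  "phi_rhs l1 l2 c \<theta> p =
     sqrt (c\<^sup>2 + 2 * cos \<theta> * Bval l1 l2 p - (Dc c \<theta>)\<^sup>2 * (Bval l1 l2 p)\<^sup>2)"

definition phi :: "real \<Rightarrow> real \<Rightarrow> real \<Rightarrow> real \<Rightarrow> real \<Rightarrow> real" where
  "phi l1 l2 c \<theta> = (THE \<phi>. \<phi> 0 = 0 \<and>
      (\<forall>u. (\<phi> has_real_derivative phi_rhs l1 l2 c \<theta> (\<phi> u)) (at u)))"

definition Bfun :: "real \<Rightarrow> real \<Rightarrow> real \<Rightarrow> real \<Rightarrow> real \<Rightarrow> real" where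
  "Bfun l1 l2 c \<theta> u = Bval l1 l2 (phi l1 l2 c \<theta> u)"

definition phid :: "real \<Rightarrow> real \<Rightarrow> real \<Rightarrow> real \<Rightarrow> real \<Rightarrow> real" where
  "phid l1 l2 c \<theta> u = phi_rhs l1 l2 c \<theta> (phi l1 l2 c \<theta> u)"

definition Ucat :: "real \<Rightarrow> real \<Rightarrow> real \<Rightarrow> real \<Rightarrow> real" where
  "Ucat l1 l2 c \<theta> = (THE U. U > 0 \<and> phi l1 l2 c \<theta> U = pi)"

definition fcat :: "real \<Rightarrow> real \<Rightarrow> real \<Rightarrow> real \<Rightarrow> real \<Rightarrow> real" where
  "fcat l1 l2 c \<theta> = (THE f. f 0 = 0 \<and>
      (\<forall>u. (f has_real_derivative Dc c \<theta> * Bfun l1 l2 c \<theta> u) (at u)))"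

definition Gcat :: "real \<Rightarrow> real \<Rightarrow> real \<Rightarrow> real \<Rightarrow> real \<Rightarrow> real" where
  "Gcat l1 l2 c \<theta> u =
     (LBINT s=0..u. (c - phid l1 l2 c \<theta> s) / Bfun l1 l2 c \<theta> s)"

definition Hcat :: "real \<Rightarrow> real \<Rightarrow> real \<Rightarrow> real \<Rightarrow> real" where
  "Hcat l1 l2 c \<theta> = Dc c \<theta> * fcat l1 l2 c \<theta> (Ucat l1 l2 c \<theta>)
                     + c * Gcat l1 l2 c \<theta> (Ucat l1 l2 c \<theta>)"

definition theta_tilde :: "real \<Rightarrow> real \<Rightarrow> real \<Rightarrow> real" where
  "theta_tilde l1 l2 c = (THE \<theta>. 0 < \<theta> \<and> \<theta> < pi / 2 \<and> \<theta> < theta_plus l1 c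
                                  \<and> Hcat l1 l2 c \<theta> = 0)"

definition Xmap :: "real \<Rightarrow> real \<Rightarrow> real \<Rightarrow> real \<Rightarrow> complex \<Rightarrow> real \<times> real \<times> real" where
  "Xmap l1 l2 c \<theta> z =
    (let u = Re z; v = Im z; D = Dc c \<theta>;
         ph = phi l1 l2 c \<theta> u; ph' = phid l1 l2 c \<theta> u;
         B = Bfun l1 l2 c \<theta> u; f = fcat l1 l2 c \<theta> u; f' = D * B;
         x3 = - l1 * l2 * D * v + l1 * l2 * Gcat l1 l2 c \<theta> u;
         A = f + c * v;
         M1 = c * cos x3 * cosh A - l1 * l2 * D * sin x3 * sinh A;
         M2 = c * cos x3 * sinh A - l1 * l2 * D * sin x3 * cosh A;
         M3 = c * sin x3 * sinh A + l1 * l2 * D * cos x3 * cosh A;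
         M4 = c * sin x3 * cosh A + l1 * l2 * D * cos x3 * sinh A;
         N = (c\<^sup>2 + l1\<^sup>2 * l2\<^sup>2 * D\<^sup>2) * B;
         x1 = - (1 / N) * ((1 / l1) * f' * cos ph * M1 - (1 / l1) * (c - ph') * sin ph * M2
                           - (1 / l2) * (c - ph') * cos ph * M3 - (1 / l2) * f' * sin ph * M4);
         x2 = - (1 / N) * ((1 / l1) * f' * cos ph * M4 - (1 / l1) * (c - ph') * sin ph * M3
                           + (1 / l2) * (c - ph') * cos ph * M2 + (1 / l2) * f' * sin ph * M1)
     in (x1, x2, x3))"

definition catenoid :: "real \<Rightarrow> real \<Rightarrow> real \<Rightarrow> (real \<times> real \<times> real) set" where
  "catenoid l1 l2 c = range (Xmap l1 l2 c (theta_tilde l1 l2 c))"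

definition Gamma :: "real \<Rightarrow> real \<Rightarrow> real \<Rightarrow> (real \<times> real \<times> real) set" where
  "Gamma l1 l2 c = {p \<in> catenoid l1 l2 c. snd (snd p) = 0}"

end

theory Submission
  imports Defs
begin

(* For c large every ingredient of the construction is explicit: phi is the inverse of
   p |-> int_0^p dp'/phi', and the substitution p = phi(u) turns D f(u) + c G(u) into
   W(phi(u)), where W is the primitive of a pi-periodic integrand of size O(1/c^3) depending
   on t = cos theta. H(c, theta) = W(pi) is strictly decreasing in t, which identifies
   theta_c. On Gamma_c the equation x3 = 0 reads D v = G(u), hence D A = W(phi(u)); since
   W(0) = W(pi) = 0 this forces |A| <= 1, so the hyperbolic factors stay bounded. The factors
   f' and c - phi' are O(1/c) and the normalisation is of order c^2, so x1, x2 = O(1/c^2). *)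

definition primitive :: "(real \<Rightarrow> real) \<Rightarrow> real \<Rightarrow> real" where
  "primitive g x = (LBINT p=0..x. g p)"

lemma primitive_0 [simp]: "primitive g 0 = 0"
  by (simp add: primitive_def zero_ereal_def)

lemma has_real_derivative_primitive:
  assumes "continuous_on UNIV g"
  shows "(primitive g has_real_derivative g x) (at x)"
proof -
  let ?a = "min 0 x - 1" and ?b = "max 0 x + 1"
  have "((\<lambda>u. LBINT y=0..u. g y) has_vector_derivative g x) (at x within {?a..?b})"
    using interval_integral_FTC2[of ?a 0 ?b g x] continuous_on_subset[OF assms]
    by (simp add: zero_ereal_def)
  then have "((\<lambda>u. LBINT y=0..u. g y) has_vector_derivative g x) (at x within {?a<..<?b})"
    by (rule has_vector_derivative_within_subset) auto
  then have "((\<lambda>u. LBINT y=0..u. g y) has_vector_derivative g x) (at x)"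
    by (subst (asm) has_vector_derivative_within_open) auto
  then show ?thesis
    unfolding primitive_def has_real_derivative_iff_has_vector_derivative .
qed

lemma primitive_eq_integral:
  assumes "continuous_on UNIV g" "0 \<le> x"
  shows "primitive g x = integral {0..x} g"
  unfolding primitive_def
  using interval_integral_eq_integral[of 0 x g] borel_integrable_atLeastAtMost'[of 0 x g]
    continuous_on_subset[OF assms(1)] assms(2)
  by (simp add: zero_ereal_def)

lemma eq_if_same_derivative:
  fixes f g :: "real \<Rightarrow> real"
  assumes "\<And>x. (f has_real_derivative h x) (at x)"
    and "\<And>x. (g has_real_derivative h x) (at x)"
    and "f a = g a"
  shows "f x = g x"
proof -
  have "\<forall>x. ((\<lambda>x. f x - g x) has_real_derivative 0) (at x)"
    using DERIV_diff[OF assms(1,2)] by fastforce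
  then have "f x - g x = f a - g a" by (rule DERIV_isconst_all)
  then show ?thesis using assms(3) by simp
qed

lemma primitive_unique:
  assumes "continuous_on UNIV g" "\<And>x. (F has_real_derivative g x) (at x)" "F 0 = 0"
  shows "primitive g x = F x"
  by (rule eq_if_same_derivative[where a = 0])
     (use assms has_real_derivative_primitive in auto)

lemma primitive_diff:
  assumes "continuous_on UNIV g" "continuous_on UNIV h"
  shows "primitive (\<lambda>p. g p - h p) x = primitive g x - primitive h x"
  by (rule primitive_unique)
     (use assms in \<open>auto intro!: continuous_intros DERIV_diff has_real_derivative_primitive\<close>)

lemma primitive_increment_ge:
  assumes "continuous_on UNIV g" "\<And>p. m \<le> g p" "x \<le> y"
  shows "m * (y - x) \<le> primitive g y - primitive g x"
proof -
  have "(\<lambda>z. primitive g z - m * z) x \<le> (\<lambda>z. primitive g z - m * z) y"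
  proof (rule DERIV_nonneg_imp_nondecreasing[OF assms(3)])
    fix z
    have "((\<lambda>z. primitive g z - m * z) has_real_derivative g z - m) (at z)"
      using DERIV_diff[OF has_real_derivative_primitive[OF assms(1)] DERIV_cmult[OF DERIV_ident]]
      by simp
    then show "\<exists>d. ((\<lambda>z. primitive g z - m * z) has_real_derivative d) (at z) \<and> 0 \<le> d"
      using assms(2)[of z] by auto
  qed
  then show ?thesis by (simp add: algebra_simps)
qed

lemma primitive_increment_le:
  assumes "continuous_on UNIV g" "\<And>p. g p \<le> M" "x \<le> y"
  shows "primitive g y - primitive g x \<le> M * (y - x)"
proof -
  have "(\<lambda>z. M * z - primitive g z) x \<le> (\<lambda>z. M * z - primitive g z) y"
  proof (rule DERIV_nonneg_imp_nondecreasing[OF assms(3)])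
    fix z
    have "((\<lambda>z. M * z - primitive g z) has_real_derivative M - g z) (at z)"
      using DERIV_diff[OF DERIV_cmult[OF DERIV_ident] has_real_derivative_primitive[OF assms(1)]]
      by simp
    then show "\<exists>d. ((\<lambda>z. M * z - primitive g z) has_real_derivative d) (at z) \<and> 0 \<le> d"
      using assms(2)[of z] by auto
  qed
  then show ?thesis by (simp add: algebra_simps)
qed

locale autonomous_ode =
  fixes g :: "real \<Rightarrow> real" and a b :: real
  assumes continuous: "continuous_on UNIV g" and lower_pos: "0 < a"
    and lower: "\<And>p. a \<le> g p" and upper: "\<And>p. g p \<le> b"
begin

lemma g_pos: "0 < g p"
  using lower_pos lower[of p] by linarith

lemma g_nonzero [simp]: "g p \<noteq> 0"
  using g_pos[of p] by simp

lemma continuous_inverse: "continuous_on UNIV (\<lambda>p. 1 / g p)"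
  using continuous g_pos by (auto intro!: continuous_intros simp: less_imp_neq[symmetric])

definition arrival_time :: "real \<Rightarrow> real" where
  "arrival_time = primitive (\<lambda>p. 1 / g p)"

lemma has_real_derivative_arrival_time: "(arrival_time has_real_derivative 1 / g x) (at x)"
  unfolding arrival_time_def by (rule has_real_derivative_primitive[OF continuous_inverse])

lemma arrival_time_0 [simp]: "arrival_time 0 = 0"
  by (simp add: arrival_time_def)

lemma arrival_time_strict_mono: "x < y \<Longrightarrow> arrival_time x < arrival_time y"
proof (rule DERIV_pos_imp_increasing[of x y arrival_time])
  fix z
  show "\<exists>d. (arrival_time has_real_derivative d) (at z) \<and> 0 < d"
    using has_real_derivative_arrival_time[of z] g_pos[of z] by auto
qed

lemma arrival_time_inj: "arrival_time x = arrival_time y \<Longrightarrow> x = y"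
  by (metis arrival_time_strict_mono linorder_neqE_linordered_idom order_less_irrefl)

lemma isCont_arrival_time: "isCont arrival_time x"
  using has_real_derivative_arrival_time DERIV_isCont by blast

lemma arrival_time_surj: "\<exists>x. arrival_time x = u"
proof -
  have b: "0 < b" using g_pos[of 0] upper[of 0] by linarith
  have bound: "1 / b \<le> 1 / g p" for p
    using g_pos upper by (simp add: frac_le)
  have "(1 / b) * (\<bar>u\<bar> * b - 0) \<le> arrival_time (\<bar>u\<bar> * b) - arrival_time 0"
    unfolding arrival_time_def
    by (rule primitive_increment_ge[OF continuous_inverse bound]) (use b in simp)
  then have 1: "u \<le> arrival_time (\<bar>u\<bar> * b)" using b by simp
  have "(1 / b) * (0 - (- \<bar>u\<bar> * b)) \<le> arrival_time 0 - arrival_time (- \<bar>u\<bar> * b)"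
    unfolding arrival_time_def
    by (rule primitive_increment_ge[OF continuous_inverse bound]) (use b in simp)
  then have 2: "arrival_time (- \<bar>u\<bar> * b) \<le> u" using b by simp
  have "\<exists>x. - \<bar>u\<bar> * b \<le> x \<and> x \<le> \<bar>u\<bar> * b \<and> arrival_time x = u"
    by (rule IVT[of arrival_time, OF 2 1]) (use b isCont_arrival_time in auto)
  then show ?thesis by blast
qed

definition solution :: "real \<Rightarrow> real" where
  "solution u = (SOME x. arrival_time x = u)"

lemma arrival_time_solution [simp]: "arrival_time (solution u) = u"
  unfolding solution_def by (rule someI_ex[OF arrival_time_surj])

lemma solution_arrival_time [simp]: "solution (arrival_time x) = x"
  using arrival_time_inj arrival_time_solution by blast

lemma solution_0 [simp]: "solution 0 = 0"
  using solution_arrival_time[of 0] by simp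

lemma has_real_derivative_solution: "(solution has_real_derivative g (solution u)) (at u)"
proof -
  have "isCont solution u"
    using isCont_inverse_function[of 1 "solution u" solution arrival_time]
      isCont_arrival_time by simp
  then have "(solution has_real_derivative inverse (1 / g (solution u))) (at u)"
    by (intro DERIV_inverse_function[where a = "u - 1" and b = "u + 1"])
       (use has_real_derivative_arrival_time g_pos in auto)
  then show ?thesis by simp
qed

lemma continuous_solution: "continuous_on UNIV solution"
  by (meson DERIV_isCont has_real_derivative_solution continuous_at_imp_continuous_on)

lemma solution_unique:
  assumes "\<psi> 0 = 0" "\<And>u. (\<psi> has_real_derivative g (\<psi> u)) (at u)"
  shows "\<psi> = solution"
proof
  fix u
  have "arrival_time (\<psi> u) = u"
    by (rule eq_if_same_derivative[where a = 0 and h = "\<lambda>_. 1"])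
       (use assms DERIV_chain2[OF has_real_derivative_arrival_time assms(2)] in auto)
  then show "\<psi> u = solution u" by (metis solution_arrival_time)
qed

lemma the_solution:
  "(THE \<psi>. \<psi> 0 = 0 \<and> (\<forall>u. (\<psi> has_real_derivative g (\<psi> u)) (at u))) = solution"
  by (rule the_equality) (use has_real_derivative_solution solution_unique in auto)

end

text \<open>With b = B(\<phi>) and t = cos \<theta>, so that D^2 = (1 - t^2) / c^2, speed is the
  right-hand side \<phi>' of the equation for \<phi>, and H_integrand is the integrand of H in the
  variable p = \<phi>(u).\<close>

definition speed :: "real \<Rightarrow> real \<Rightarrow> real \<Rightarrow> real" where
  "speed c b t = sqrt (c\<^sup>2 + 2 * t * b - (1 - t\<^sup>2) * b\<^sup>2 / c\<^sup>2)"

definition H_integrand :: "real \<Rightarrow> real \<Rightarrow> real \<Rightarrow> real" where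
  "H_integrand c b t = (c\<^sup>2 + (1 - t\<^sup>2) * b\<^sup>2 / c\<^sup>2) / (b * speed c b t) - c / b"

locale large_c =
  fixes c b :: real
  assumes c_pos: "0 < c" and b_pos: "0 < b" and b_le: "4 * b \<le> c\<^sup>2"
begin

lemma b_sq_div_le: "b\<^sup>2 / c\<^sup>2 \<le> b / 4"
proof -
  have "b\<^sup>2 \<le> b * (c\<^sup>2 / 4)" using b_le b_pos by (simp add: power2_eq_square)
  then show ?thesis using c_pos by (simp add: divide_le_eq field_simps)
qed

lemma radicand_bounds:
  assumes "0 \<le> t" "t \<le> 1"
  shows "c\<^sup>2 / 4 \<le> c\<^sup>2 + 2 * t * b - (1 - t\<^sup>2) * b\<^sup>2 / c\<^sup>2"
    and "c\<^sup>2 + 2 * t * b - (1 - t\<^sup>2) * b\<^sup>2 / c\<^sup>2 \<le> 4 * c\<^sup>2"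
proof -
  have "0 \<le> (1 - t\<^sup>2) * b\<^sup>2 / c\<^sup>2" "(1 - t\<^sup>2) * b\<^sup>2 / c\<^sup>2 \<le> b\<^sup>2 / c\<^sup>2"
    using assms by (auto simp: power_le_one divide_right_mono mult_left_le_one_le)
  moreover have "0 \<le> 2 * t * b" "2 * t * b \<le> 2 * b"
    using assms b_pos by (auto simp: mult_left_le_one_le)
  ultimately show "c\<^sup>2 / 4 \<le> c\<^sup>2 + 2 * t * b - (1 - t\<^sup>2) * b\<^sup>2 / c\<^sup>2"
    and "c\<^sup>2 + 2 * t * b - (1 - t\<^sup>2) * b\<^sup>2 / c\<^sup>2 \<le> 4 * c\<^sup>2"
    using b_sq_div_le b_le b_pos by linarith+
qed

context
  fixes t :: real
  assumes t: "0 \<le> t" "t \<le> 1"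
begin

lemma speed_ge: "c / 2 \<le> speed c b t"
  unfolding speed_def using radicand_bounds(1)[OF t] c_pos
  by (intro real_le_rsqrt) (simp add: power_divide)

lemma speed_le: "speed c b t \<le> 2 * c"
  unfolding speed_def using radicand_bounds[OF t] c_pos
  by (intro real_le_lsqrt) (auto simp: power_mult_distrib)

lemma speed_pos: "0 < speed c b t"
  using speed_ge c_pos by linarith

lemma speed_sq: "(speed c b t)\<^sup>2 = c\<^sup>2 + 2 * t * b - (1 - t\<^sup>2) * b\<^sup>2 / c\<^sup>2"
  unfolding speed_def using radicand_bounds(1)[OF t]
  by (intro real_sqrt_pow2) (smt (verit) zero_le_power2 divide_nonneg_pos)

lemma c_minus_speed:
  "c - speed c b t = ((1 - t\<^sup>2) * b\<^sup>2 / c\<^sup>2 - 2 * t * b) / (c + speed c b t)"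
proof -
  have "(c - speed c b t) * (c + speed c b t) = c\<^sup>2 - (speed c b t)\<^sup>2"
    by (simp add: power2_eq_square algebra_simps)
  then show ?thesis
    using speed_pos c_pos by (simp add: speed_sq eq_divide_eq add_pos_pos)
qed

lemma abs_c_minus_speed_le: "\<bar>c - speed c b t\<bar> \<le> 3 * b / c"
proof -
  define X where "X = (1 - t\<^sup>2) * b\<^sup>2 / c\<^sup>2"
  have "0 \<le> X" "X \<le> b\<^sup>2 / c\<^sup>2"
    using t unfolding X_def by (auto simp: power_le_one divide_right_mono mult_left_le_one_le)
  then have "0 \<le> X" "X \<le> b / 4"
    using b_sq_div_le by linarith+
  moreover have "0 \<le> 2 * t * b" "2 * t * b \<le> 2 * b"
    using t b_pos by (auto simp: mult_left_le_one_le)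
  ultimately have "- (3 * b) \<le> X - 2 * t * b" "X - 2 * t * b \<le> 3 * b"
    by linarith+
  then have "\<bar>X - 2 * t * b\<bar> \<le> 3 * b" by (simp add: abs_le_iff)
  then have "\<bar>X - 2 * t * b\<bar> / (c + speed c b t) \<le> 3 * b / c"
    using speed_pos c_pos b_pos by (intro frac_le) auto
  then show ?thesis
    using c_minus_speed speed_pos c_pos by (simp add: X_def)
qed

lemma H_integrand_le: "H_integrand c b t \<le> 4 * (1 - t\<^sup>2) * b / c ^ 3"
proof -
  define F where "F = speed c b t"
  define X where "X = (1 - t\<^sup>2) * b\<^sup>2 / c\<^sup>2"
  have F: "c / 2 \<le> F" "0 < F" using speed_ge speed_pos by (auto simp: F_def)
  have X: "0 \<le> X" using t by (simp add: X_def power_le_one)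
  have "c * (c - F) = (c / (c + F)) * (X - 2 * t * b)"
    using c_minus_speed by (simp add: F_def X_def)
  also have "\<dots> \<le> X"
  proof (cases "0 \<le> X - 2 * t * b")
    case True
    then have "c / (c + F) * (X - 2 * t * b) \<le> X - 2 * t * b"
      using F c_pos by (intro mult_left_le_one_le) auto
    moreover have "0 \<le> 2 * t * b" using t b_pos by simp
    ultimately show ?thesis by linarith
  next
    case False
    then have "c / (c + F) * (X - 2 * t * b) \<le> 0"
      using F c_pos by (intro mult_nonneg_nonpos) auto
    then show ?thesis using X by linarith
  qed
  finally have "c\<^sup>2 + X - c * F \<le> 2 * X" by (simp add: algebra_simps power2_eq_square)
  have "H_integrand c b t = (c\<^sup>2 + X - c * F) / (b * F)"
    using b_pos F by (simp add: H_integrand_def F_def X_def field_simps)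
  also have "\<dots> \<le> 2 * X / (b * F)"
    using \<open>c\<^sup>2 + X - c * F \<le> 2 * X\<close> b_pos F by (intro divide_right_mono) auto
  also have "\<dots> \<le> 2 * X / (b * (c / 2))"
    using X b_pos F c_pos by (intro divide_left_mono) auto
  also have "\<dots> = 4 * (1 - t\<^sup>2) * b / c ^ 3"
    using b_pos c_pos by (simp add: X_def field_simps power2_eq_square power3_eq_cube)
  finally show ?thesis .
qed

end

lemma H_integrand_at_0: "b / c ^ 3 \<le> H_integrand c b 0"
proof -
  have "speed c b 0 \<le> c"
    unfolding speed_def using c_pos by (intro real_le_lsqrt) auto
  then have "(c\<^sup>2 + b\<^sup>2 / c\<^sup>2) / (b * c) \<le> (c\<^sup>2 + b\<^sup>2 / c\<^sup>2) / (b * speed c b 0)"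
    using speed_pos[of 0] b_pos c_pos by (intro divide_left_mono) auto
  moreover have "(c\<^sup>2 + b\<^sup>2 / c\<^sup>2) / (b * c) - c / b = b / c ^ 3"
    using b_pos c_pos by (simp add: field_simps power2_eq_square power3_eq_cube)
  ultimately show ?thesis by (simp add: H_integrand_def)
qed

lemma H_integrand_at_1: "H_integrand c b 1 \<le> - 1 / (3 * c)"
proof -
  define F where "F = speed c b 1"
  have F: "0 < F" "F \<le> 2 * c" using speed_pos[of 1] speed_le[of 1] by (auto simp: F_def)
  have "H_integrand c b 1 = c * (c - F) / (b * F)"
    using b_pos F by (simp add: H_integrand_def F_def field_simps power2_eq_square)
  also have "\<dots> = - (2 * c) / (F * (c + F))"
    using c_minus_speed[of 1] b_pos F c_pos by (simp add: F_def divide_simps)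
  also have "\<dots> \<le> - (2 * c) / ((2 * c) * (3 * c))"
    using F c_pos by (intro divide_left_mono_neg mult_mono mult_pos_pos) auto
  also have "\<dots> = - 1 / (3 * c)"
    using c_pos by simp
  finally show ?thesis .
qed

lemma speed_increment_ge:
  assumes t: "0 \<le> t1" "t1 \<le> t2" "t2 \<le> 1"
  shows "b * (t2 - t1) / (2 * c) \<le> speed c b t2 - speed c b t1"
proof -
  define F1 where "F1 = speed c b t1"
  define F2 where "F2 = speed c b t2"
  have t1: "0 \<le> t1" "t1 \<le> 1" and t2: "0 \<le> t2" "t2 \<le> 1" using t by auto
  have F1: "0 < F1" "F1 \<le> 2 * c" using speed_pos[OF t1] speed_le[OF t1] by (auto simp: F1_def)
  have F2: "0 < F2" "F2 \<le> 2 * c" using speed_pos[OF t2] speed_le[OF t2] by (auto simp: F2_def)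
  have "t1\<^sup>2 \<le> t2\<^sup>2" using t by (intro power_mono) auto
  then have "(1 - t2\<^sup>2) * b\<^sup>2 / c\<^sup>2 \<le> (1 - t1\<^sup>2) * b\<^sup>2 / c\<^sup>2"
    by (intro divide_right_mono mult_right_mono) auto
  then have sq: "2 * b * (t2 - t1) \<le> F2\<^sup>2 - F1\<^sup>2"
    using speed_sq[OF t1] speed_sq[OF t2] unfolding F1_def F2_def by (simp add: algebra_simps)
  have "0 \<le> 2 * b * (t2 - t1)" using b_pos t by simp
  then have "(2 * b * (t2 - t1)) / (4 * c) \<le> (F2\<^sup>2 - F1\<^sup>2) / (F2 + F1)"
    using sq F1 F2 by (intro frac_le) linarith+
  also have "\<dots> = F2 - F1"
    using F1 F2 by (simp add: power2_eq_square field_simps)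
  finally show ?thesis by (simp add: F1_def F2_def)
qed

lemma H_integrand_decreasing:
  assumes t: "0 \<le> t1" "t1 < t2" "t2 \<le> 1"
  shows "(t2 - t1) / (8 * c) \<le> H_integrand c b t1 - H_integrand c b t2"
proof -
  define F1 where "F1 = speed c b t1"
  define F2 where "F2 = speed c b t2"
  define E1 where "E1 = c\<^sup>2 + (1 - t1\<^sup>2) * b\<^sup>2 / c\<^sup>2"
  define E2 where "E2 = c\<^sup>2 + (1 - t2\<^sup>2) * b\<^sup>2 / c\<^sup>2"
  have F1: "0 < F1" "F1 \<le> 2 * c" using speed_pos speed_le t by (auto simp: F1_def)
  have F2: "0 < F2" "F2 \<le> 2 * c" using speed_pos speed_le t by (auto simp: F2_def)
  have dF: "b * (t2 - t1) / (2 * c) \<le> F2 - F1" "0 \<le> b * (t2 - t1) / (2 * c)"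
    using speed_increment_ge[of t1 t2] t b_pos c_pos by (auto simp: F1_def F2_def)
  have "0 \<le> (1 - t2\<^sup>2) * b\<^sup>2 / c\<^sup>2" using t by (simp add: power_le_one)
  then have E2: "c\<^sup>2 \<le> E2" "0 \<le> E2"
    using zero_le_power2[of c] by (simp_all add: E2_def)
  have "t1\<^sup>2 \<le> t2\<^sup>2" using t by (intro power_mono) auto
  then have E12: "E2 \<le> E1"
    unfolding E1_def E2_def by (simp add: divide_right_mono mult_right_mono)
  have "(t2 - t1) / (8 * c) = (c\<^sup>2 * (b * (t2 - t1) / (2 * c))) / (b * ((2 * c) * (2 * c)))"
    using b_pos c_pos by (simp add: field_simps power2_eq_square)
  also have "\<dots> \<le> (E2 * (F2 - F1)) / (b * (F1 * F2))"
  proof (rule frac_le)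
    show "0 \<le> E2 * (F2 - F1)"
      using E2 dF by simp
    show "c\<^sup>2 * (b * (t2 - t1) / (2 * c)) \<le> E2 * (F2 - F1)"
      using E2 dF by (intro mult_mono) auto
    show "b * (F1 * F2) \<le> b * ((2 * c) * (2 * c))"
      using F1 F2 b_pos by (intro mult_left_mono mult_mono) auto
  qed (use b_pos F1 F2 in auto)
  also have "\<dots> = E2 / (b * F1) - E2 / (b * F2)"
    using b_pos F1 F2 by (simp add: field_simps)
  also have "\<dots> \<le> E1 / (b * F1) - E2 / (b * F2)"
    using E12 b_pos F1 by (simp add: divide_right_mono)
  also have "\<dots> = H_integrand c b t1 - H_integrand c b t2"
    by (simp add: H_integrand_def E1_def E2_def F1_def F2_def)
  finally show ?thesis .
qed

end

text \<open>The two combinations are the components x1 and x2 of Xmap.\<close>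

lemma abs_frame_combination_le:
  fixes l1 l2 a b m1 m2 m3 m4 \<alpha> \<mu> n N ph :: real
  assumes l: "0 < l2" "l2 \<le> l1" and ab: "\<bar>a\<bar> \<le> \<alpha>" "\<bar>b\<bar> \<le> \<alpha>"
    and m: "\<bar>m1\<bar> \<le> \<mu>" "\<bar>m2\<bar> \<le> \<mu>" "\<bar>m3\<bar> \<le> \<mu>" "\<bar>m4\<bar> \<le> \<mu>"
    and N: "0 < n" "n \<le> N"
  shows "\<bar>- (1 / N) * ((1 / l1) * a * cos ph * m1 - (1 / l1) * b * sin ph * m2
            - (1 / l2) * b * cos ph * m3 - (1 / l2) * a * sin ph * m4)\<bar> \<le> 4 * \<alpha> * \<mu> / (l2 * n)"
    and "\<bar>- (1 / N) * ((1 / l1) * a * cos ph * m4 - (1 / l1) * b * sin ph * m3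
            + (1 / l2) * b * cos ph * m2 + (1 / l2) * a * sin ph * m1)\<bar> \<le> 4 * \<alpha> * \<mu> / (l2 * n)"
proof -
  have summand: "\<bar>(1 / l) * x * y * m\<bar> \<le> \<alpha> * \<mu> / l2"
    if "l2 \<le> l" "\<bar>x\<bar> \<le> \<alpha>" "\<bar>y\<bar> \<le> 1" "\<bar>m\<bar> \<le> \<mu>" for l x y m
  proof -
    have "0 < l" "1 / l \<le> 1 / l2" using that(1) l by (auto simp: frac_le)
    moreover have "0 \<le> \<alpha>" using that(2) by linarith
    ultimately have "(1 / l) * \<bar>x\<bar> * \<bar>y\<bar> * \<bar>m\<bar> \<le> (1 / l2) * \<alpha> * 1 * \<mu>"
      using that l by (intro mult_mono) auto
    then show ?thesis using \<open>0 < l\<close> by (simp add: abs_mult)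
  qed
  have scale: "\<bar>- (1 / N) * S\<bar> \<le> 4 * \<alpha> * \<mu> / (l2 * n)" if "\<bar>S\<bar> \<le> 4 * (\<alpha> * \<mu> / l2)" for S
  proof -
    have "\<bar>- (1 / N) * S\<bar> = \<bar>S\<bar> / N" using N by (simp add: abs_mult)
    also have "\<dots> \<le> 4 * (\<alpha> * \<mu> / l2) / n"
      using that N by (intro frac_le) auto
    finally show ?thesis by simp
  qed
  have cs: "\<bar>cos ph\<bar> \<le> 1" "\<bar>sin ph\<bar> \<le> 1" by auto
  note T1 = summand[OF l(2) ab(1) cs(1)] summand[OF l(2) ab(2) cs(2)]
    and T2 = summand[OF order_refl ab(2) cs(1)] summand[OF order_refl ab(1) cs(2)]
  have sum4: "\<bar>w - x - y - z\<bar> \<le> \<bar>w\<bar> + \<bar>x\<bar> + \<bar>y\<bar> + \<bar>z\<bar>"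
    "\<bar>w - x + y + z\<bar> \<le> \<bar>w\<bar> + \<bar>x\<bar> + \<bar>y\<bar> + \<bar>z\<bar>" for w x y z :: real
    by arith+
  show "\<bar>- (1 / N) * ((1 / l1) * a * cos ph * m1 - (1 / l1) * b * sin ph * m2
            - (1 / l2) * b * cos ph * m3 - (1 / l2) * a * sin ph * m4)\<bar> \<le> 4 * \<alpha> * \<mu> / (l2 * n)"
    by (rule scale, rule order_trans[OF sum4(1)])
       (use T1[OF m(1)] T1[OF m(2)] T2[OF m(3)] T2[OF m(4)] in linarith)
  show "\<bar>- (1 / N) * ((1 / l1) * a * cos ph * m4 - (1 / l1) * b * sin ph * m3
            + (1 / l2) * b * cos ph * m2 + (1 / l2) * a * sin ph * m1)\<bar> \<le> 4 * \<alpha> * \<mu> / (l2 * n)"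
    by (rule scale, rule order_trans[OF sum4(2)])
       (use T1[OF m(4)] T1[OF m(3)] T2[OF m(2)] T2[OF m(1)] in linarith)
qed

lemma abs_cosh_sinh_le:
  fixes A :: real
  assumes "\<bar>A\<bar> \<le> 1"
  shows "\<bar>cosh A\<bar> \<le> cosh 1" and "\<bar>sinh A\<bar> \<le> cosh 1"
proof -
  have "cosh \<bar>A\<bar> \<le> cosh 1"
    using cosh_real_nonneg_le_iff[of "\<bar>A\<bar>" 1] assms by simp
  then show "\<bar>cosh A\<bar> \<le> cosh 1"
    using cosh_real_pos[of A] by simp
  have "sinh \<bar>A\<bar> \<le> sinh 1"
    using assms by (simp only: sinh_real_le_iff)
  then show "\<bar>sinh A\<bar> \<le> cosh 1"
    using sinh_le_cosh_real[of 1] sinh_real_abs[of A] by linarith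
qed

lemma Bval_eq: "Bval l1 l2 p = l2\<^sup>2 + (l1\<^sup>2 - l2\<^sup>2) * (cos p)\<^sup>2"
  unfolding Bval_def by (simp add: sin_squared_eq algebra_simps)

lemma Bval_add_pi [simp]: "Bval l1 l2 (p + pi) = Bval l1 l2 p"
  unfolding Bval_def by simp

lemma continuous_on_Bval: "continuous_on UNIV (Bval l1 l2)"
  unfolding Bval_def by (intro continuous_intros)

locale large_parameter =
  fixes l1 l2 c :: real
  assumes l2_pos: "0 < l2" and l2_le_l1: "l2 \<le> l1" and c_pos: "0 < c"
    and c_large: "4 * pi * l1\<^sup>2 \<le> c\<^sup>2"
begin

abbreviation "B \<equiv> Bval l1 l2"

lemma l1_pos: "0 < l1"
  using l2_pos l2_le_l1 by linarith

lemma four_l1_sq_le_c_sq: "4 * l1\<^sup>2 \<le> c\<^sup>2"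
proof -
  have "4 * l1\<^sup>2 \<le> 4 * pi * l1\<^sup>2"
    using pi_ge_two by (intro mult_right_mono) auto
  then show ?thesis using c_large by linarith
qed

lemma l1_sq_le_c_sq: "l1\<^sup>2 \<le> c\<^sup>2"
  using four_l1_sq_le_c_sq zero_le_power2[of l1] by linarith

lemma B_ge: "l2\<^sup>2 \<le> B p"
  unfolding Bval_eq using l2_pos l2_le_l1 by (simp add: power_mono)

lemma B_le: "B p \<le> l1\<^sup>2"
proof -
  have "(l1\<^sup>2 - l2\<^sup>2) * (cos p)\<^sup>2 \<le> (l1\<^sup>2 - l2\<^sup>2) * 1"
    using l2_pos l2_le_l1 by (intro mult_left_mono) (auto simp: power_mono abs_square_le_1)
  then show ?thesis unfolding Bval_eq by simp
qed

lemma B_pos: "0 < B p"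
  using B_ge[of p] l2_pos by (meson less_le_trans zero_less_power)

lemma B_nonzero [simp]: "B p \<noteq> 0"
  using B_pos[of p] by simp

lemma large_c_B: "large_c c (B p)"
  using B_pos[of p] B_le[of p] four_l1_sq_le_c_sq c_pos by unfold_locales auto

end

locale catenoid_data = large_parameter +
  fixes \<theta> :: real
  assumes cos_nonneg: "0 \<le> cos \<theta>"
begin

abbreviation "D \<equiv> Dc c \<theta>"

lemma cos_le_1: "cos \<theta> \<le> 1"
  by simp

lemma phi_rhs_eq: "phi_rhs l1 l2 c \<theta> p = speed c (B p) (cos \<theta>)"
proof -
  have "D\<^sup>2 * (B p)\<^sup>2 = (1 - (cos \<theta>)\<^sup>2) * (B p)\<^sup>2 / c\<^sup>2"
    unfolding Dc_def by (simp add: power_divide sin_squared_eq)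
  then show ?thesis unfolding phi_rhs_def speed_def by simp
qed

lemma continuous_on_phi_rhs: "continuous_on UNIV (phi_rhs l1 l2 c \<theta>)"
  unfolding phi_rhs_def Bval_def by (intro continuous_intros)

sublocale autonomous_ode "phi_rhs l1 l2 c \<theta>" "c / 2" "2 * c"
  using continuous_on_phi_rhs c_pos phi_rhs_eq
    large_c.speed_ge[OF large_c_B cos_nonneg cos_le_1]
    large_c.speed_le[OF large_c_B cos_nonneg cos_le_1]
  by unfold_locales auto

lemma phi_eq: "phi l1 l2 c \<theta> = solution"
  unfolding phi_def by (rule the_solution)

lemma phid_eq: "phid l1 l2 c \<theta> u = phi_rhs l1 l2 c \<theta> (solution u)"
  unfolding phid_def phi_eq ..

lemma Bfun_eq: "Bfun l1 l2 c \<theta> u = B (solution u)"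
  unfolding Bfun_def phi_eq ..

lemma Ucat_eq: "Ucat l1 l2 c \<theta> = arrival_time pi"
  unfolding Ucat_def phi_eq
proof (rule the_equality)
  show "0 < arrival_time pi \<and> solution (arrival_time pi) = pi"
    using arrival_time_strict_mono[of 0 pi] by simp
qed (metis arrival_time_solution)

text \<open>Since du = dp / \<phi>', these are the integrands of f, G and H in the variable p = \<phi>(u).\<close>

definition f_density :: "real \<Rightarrow> real" where
  "f_density p = B p / phi_rhs l1 l2 c \<theta> p"

definition G_density :: "real \<Rightarrow> real" where
  "G_density p = (c - phi_rhs l1 l2 c \<theta> p) / (B p * phi_rhs l1 l2 c \<theta> p)"

definition H_density :: "real \<Rightarrow> real" where
  "H_density p = H_integrand c (B p) (cos \<theta>)"

lemma continuous_on_f_density: "continuous_on UNIV f_density"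
  unfolding f_density_def by (intro continuous_intros continuous_on_Bval continuous_on_phi_rhs) auto

lemma continuous_on_G_density: "continuous_on UNIV G_density"
  unfolding G_density_def
  by (intro continuous_intros continuous_on_Bval continuous_on_phi_rhs) auto

lemma H_density_eq: "H_density p = D\<^sup>2 * f_density p + c * G_density p"
proof -
  have D_sq: "D\<^sup>2 = (1 - (cos \<theta>)\<^sup>2) / c\<^sup>2"
    unfolding Dc_def by (simp add: power_divide sin_squared_eq)
  show ?thesis
    unfolding D_sq H_density_def H_integrand_def f_density_def G_density_def phi_rhs_eq[symmetric]
    using c_pos g_pos[of p] by (simp add: field_simps power2_eq_square)
qed

lemma continuous_on_H_density: "continuous_on UNIV H_density"
  unfolding H_density_eq[abs_def]
  by (intro continuous_intros continuous_on_f_density continuous_on_G_density)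

lemma fcat_eq: "fcat l1 l2 c \<theta> u = D * primitive f_density (solution u)"
proof -
  have deriv: "((\<lambda>u. D * primitive f_density (solution u)) has_real_derivative D * B (solution u))
      (at u)" for u
    using DERIV_cmult[OF DERIV_chain2[OF has_real_derivative_primitive[OF continuous_on_f_density]
          has_real_derivative_solution], of D]
    by (simp add: f_density_def)
  have "fcat l1 l2 c \<theta> = (\<lambda>u. D * primitive f_density (solution u))"
    unfolding fcat_def Bfun_eq
  proof (rule the_equality)
    fix f assume f: "f 0 = 0 \<and> (\<forall>u. (f has_real_derivative D * B (solution u)) (at u))"
    show "f = (\<lambda>u. D * primitive f_density (solution u))"
      by (rule ext, rule eq_if_same_derivative[where a = 0]) (use f deriv in auto)
  qed (use deriv in simp)
  then show ?thesis by simp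
qed

lemma Gcat_eq: "Gcat l1 l2 c \<theta> u = primitive G_density (solution u)"
proof -
  have "continuous_on UNIV (\<lambda>p. (c - phi_rhs l1 l2 c \<theta> p) / B p)"
    by (intro continuous_intros continuous_on_Bval continuous_on_phi_rhs) auto
  then have cont: "continuous_on UNIV (\<lambda>s. (c - phid l1 l2 c \<theta> s) / Bfun l1 l2 c \<theta> s)"
    unfolding phid_eq Bfun_eq using continuous_on_compose2[OF _ continuous_solution] by auto
  have "Gcat l1 l2 c \<theta> u = primitive (\<lambda>s. (c - phid l1 l2 c \<theta> s) / Bfun l1 l2 c \<theta> s) u"
    unfolding Gcat_def primitive_def ..
  also have "\<dots> = primitive G_density (solution u)"
  proof (rule primitive_unique[OF cont])
    fix x
    show "((\<lambda>u. primitive G_density (solution u)) has_real_derivative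
        (c - phid l1 l2 c \<theta> x) / Bfun l1 l2 c \<theta> x) (at x)"
      using DERIV_chain2[OF has_real_derivative_primitive[OF continuous_on_G_density]
          has_real_derivative_solution]
      by (simp add: G_density_def phid_eq Bfun_eq)
  qed simp
  finally show ?thesis .
qed

lemma fcat_Gcat_combination_eq: "D * fcat l1 l2 c \<theta> u + c * Gcat l1 l2 c \<theta> u = primitive H_density (solution u)"
proof -
  have "primitive H_density x = D\<^sup>2 * primitive f_density x + c * primitive G_density x" for x
    unfolding H_density_eq
    by (rule primitive_unique)
       (auto intro!: continuous_intros derivative_eq_intros continuous_on_f_density
         continuous_on_G_density has_real_derivative_primitive)
  then show ?thesis
    unfolding fcat_eq Gcat_eq by (simp add: power2_eq_square)
qed

lemma Hcat_eq: "Hcat l1 l2 c \<theta> = primitive H_density pi"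
  unfolding Hcat_def fcat_Gcat_combination_eq Ucat_eq by simp

end

definition radius_const :: "real \<Rightarrow> real \<Rightarrow> real" where
  "radius_const l1 l2 = 12 * cosh 1 * l1\<^sup>2 / l2 ^ 3"

context large_parameter
begin

abbreviation "\<theta>\<^sub>c \<equiv> theta_tilde l1 l2 c"

lemma catenoid_data: "0 \<le> cos \<theta> \<Longrightarrow> catenoid_data l1 l2 c \<theta>"
  by unfold_locales (use l2_pos l2_le_l1 c_pos c_large in auto)

definition H_of_cos :: "real \<Rightarrow> real" where
  "H_of_cos t = primitive (\<lambda>p. H_integrand c (B p) t) pi"

lemma Hcat_eq_H_of_cos:
  assumes "0 \<le> cos \<theta>"
  shows "Hcat l1 l2 c \<theta> = H_of_cos (cos \<theta>)"
proof -
  interpret catenoid_data l1 l2 c \<theta> by (rule catenoid_data[OF assms])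
  show ?thesis using Hcat_eq unfolding H_of_cos_def H_density_def[abs_def] .
qed

lemma continuous_on_H_integrand:
  "continuous_on ({0..1} \<times> UNIV) (\<lambda>(t, p). H_integrand c (B p) t)"
proof -
  have speed_pos: "0 < speed c (B p) t" if "t \<in> {0..1}" for t p
    using large_c.speed_pos[OF large_c_B] that by auto
  have "continuous_on ({0..1} \<times> UNIV) (\<lambda>x. H_integrand c (B (snd x)) (fst x))"
    unfolding H_integrand_def speed_def Bval_def[symmetric]
    by (intro continuous_intros continuous_on_compose2[OF continuous_on_Bval])
       (use c_pos speed_pos in \<open>auto simp: speed_def less_imp_neq[symmetric]\<close>)
  then show ?thesis by (simp add: case_prod_beta')
qed

lemma continuous_on_H_integrand_at:
  assumes "t \<in> {0..1}"
  shows "continuous_on UNIV (\<lambda>p. H_integrand c (B p) t)"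
proof -
  have "continuous_on UNIV (\<lambda>p. (t, p))" by (intro continuous_intros)
  moreover have "(\<lambda>p. (t, p)) ` UNIV \<subseteq> {0..1} \<times> UNIV" using assms by auto
  ultimately show ?thesis
    using continuous_on_compose2[OF continuous_on_H_integrand, of UNIV "\<lambda>p. (t, p)"] by simp
qed

lemma continuous_on_H_of_cos: "continuous_on {0..1} H_of_cos"
proof -
  have "continuous_on {0..1} (\<lambda>t. integral (cbox 0 pi) (\<lambda>p. H_integrand c (B p) t))"
    by (rule integral_continuous_on_param)
       (rule continuous_on_subset[OF continuous_on_H_integrand], auto)
  then show ?thesis
    by (rule continuous_on_eq)
       (simp add: H_of_cos_def primitive_eq_integral[OF continuous_on_H_integrand_at])
qed

lemma H_of_cos_strict_decreasing:
  assumes "0 \<le> t1" "t1 < t2" "t2 \<le> 1"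
  shows "H_of_cos t2 < H_of_cos t1"
proof -
  have cont: "continuous_on UNIV (\<lambda>p. H_integrand c (B p) t)" if "t \<in> {t1, t2}" for t
    using continuous_on_H_integrand_at that assms by auto
  have "(t2 - t1) / (8 * c) * (pi - 0)
      \<le> primitive (\<lambda>p. H_integrand c (B p) t1 - H_integrand c (B p) t2) pi
        - primitive (\<lambda>p. H_integrand c (B p) t1 - H_integrand c (B p) t2) 0"
    by (rule primitive_increment_ge)
       (use cont large_c.H_integrand_decreasing[OF large_c_B assms] in
         \<open>auto intro: continuous_intros\<close>)
  moreover have "0 < (t2 - t1) / (8 * c) * (pi - 0)"
    using assms c_pos by simp
  ultimately show ?thesis
    unfolding H_of_cos_def using primitive_diff[OF cont cont] by simp
qed

lemma H_of_cos_0: "0 < H_of_cos 0"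
proof -
  have "l2\<^sup>2 / c ^ 3 * (pi - 0) \<le> H_of_cos 0 - primitive (\<lambda>p. H_integrand c (B p) 0) 0"
    unfolding H_of_cos_def
  proof (rule primitive_increment_ge[OF continuous_on_H_integrand_at])
    fix p
    have "l2\<^sup>2 / c ^ 3 \<le> B p / c ^ 3"
      using B_ge c_pos by (intro divide_right_mono) auto
    also have "\<dots> \<le> H_integrand c (B p) 0"
      by (rule large_c.H_integrand_at_0[OF large_c_B])
    finally show "l2\<^sup>2 / c ^ 3 \<le> H_integrand c (B p) 0" .
  qed auto
  moreover have "0 < l2\<^sup>2 / c ^ 3 * (pi - 0)"
    using l2_pos c_pos by simp
  ultimately show ?thesis by simp
qed

lemma H_of_cos_1: "H_of_cos 1 < 0"
proof -
  have "H_of_cos 1 - primitive (\<lambda>p. H_integrand c (B p) 1) 0 \<le> - 1 / (3 * c) * (pi - 0)"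
    unfolding H_of_cos_def
  proof (rule primitive_increment_le[OF continuous_on_H_integrand_at])
    show "H_integrand c (B p) 1 \<le> - 1 / (3 * c)" for p
      by (rule large_c.H_integrand_at_1[OF large_c_B])
  qed auto
  moreover have "- 1 / (3 * c) * (pi - 0) < 0"
    using c_pos by (simp add: divide_neg_pos mult_neg_pos)
  ultimately show ?thesis by simp
qed

lemma theta_plus_eq_pi: "theta_plus l1 c = pi"
proof -
  have "0 < l1\<^sup>2" using l1_pos by simp
  then have "2 * l1\<^sup>2 < c\<^sup>2" using four_l1_sq_le_c_sq by linarith
  then have "(sqrt 2 * l1)\<^sup>2 < c\<^sup>2" by (simp add: power_mult_distrib)
  then have "sqrt 2 * l1 < c"
    using c_pos by (simp add: power_less_imp_less_base)
  then show ?thesis unfolding theta_plus_def by simp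
qed

lemma ex1_theta_tilde:
  "\<exists>!\<theta>. 0 < \<theta> \<and> \<theta> < pi / 2 \<and> \<theta> < theta_plus l1 c \<and> Hcat l1 l2 c \<theta> = 0"
proof -
  have "\<exists>t. 0 \<le> t \<and> t \<le> 1 \<and> H_of_cos t = 0"
    by (rule IVT2') (use H_of_cos_0 H_of_cos_1 continuous_on_H_of_cos in auto)
  then obtain t where "0 \<le> t" "t \<le> 1" and t0: "H_of_cos t = 0"
    by blast
  moreover have "t \<noteq> 0" "t \<noteq> 1"
    using t0 H_of_cos_0 H_of_cos_1 by auto
  ultimately have t: "0 < t" "t < 1" "H_of_cos t = 0"
    by auto
  have H_of_cos_inj: "s = t" if "0 < s" "s < 1" "H_of_cos s = 0" for s
    using H_of_cos_strict_decreasing[of s t] H_of_cos_strict_decreasing[of t s] that t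
    by (cases s t rule: linorder_cases) auto
  show ?thesis
  proof (rule ex1I)
    have "0 < arccos t" "arccos t < pi / 2"
      using arccos_less_arccos[of t 1] arccos_less_arccos[of 0 t] t by auto
    then show "0 < arccos t \<and> arccos t < pi / 2 \<and> arccos t < theta_plus l1 c
        \<and> Hcat l1 l2 c (arccos t) = 0"
      using t theta_plus_eq_pi Hcat_eq_H_of_cos[of "arccos t"] by simp
  next
    fix \<theta> assume \<theta>: "0 < \<theta> \<and> \<theta> < pi / 2 \<and> \<theta> < theta_plus l1 c \<and> Hcat l1 l2 c \<theta> = 0"
    have "0 < cos \<theta>" using \<theta> by (intro cos_gt_zero_pi) auto
    moreover have "cos \<theta> < 1" using cos_monotone_0_pi[of 0 \<theta>] \<theta> by simp
    ultimately have "cos \<theta> = t"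
      using H_of_cos_inj \<theta> Hcat_eq_H_of_cos[of \<theta>] by simp
    then show "\<theta> = arccos t" using arccos_cos[of \<theta>] \<theta> by simp
  qed
qed

lemma theta_tilde:
  "0 < \<theta>\<^sub>c" "\<theta>\<^sub>c < pi / 2" "Hcat l1 l2 c \<theta>\<^sub>c = 0"
  using theI'[OF ex1_theta_tilde] unfolding theta_tilde_def by auto

sublocale tilde: catenoid_data l1 l2 c "\<theta>\<^sub>c"
  using catenoid_data theta_tilde by (simp add: cos_gt_zero_pi less_imp_le)

abbreviation "W \<equiv> primitive tilde.H_density"

lemma W_pi: "W pi = 0"
  using theta_tilde(3) tilde.Hcat_eq by simp

lemma W_add_pi: "W (x + pi) = W x"
proof -
  have "((\<lambda>x. W (x + pi)) has_real_derivative tilde.H_density x) (at x)" for x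
    using DERIV_chain2[OF has_real_derivative_primitive[OF tilde.continuous_on_H_density]
        DERIV_add[OF DERIV_ident DERIV_const[of pi]]]
    by (simp add: tilde.H_density_def)
  then show ?thesis
    using primitive_unique[OF tilde.continuous_on_H_density, of "\<lambda>x. W (x + pi)"] W_pi
    by simp
qed

lemma W_add_nat_pi: "W (x + real n * pi) = W x"
proof (induction n)
  case (Suc n)
  have "W (x + real (Suc n) * pi) = W ((x + real n * pi) + pi)"
    by (simp add: algebra_simps)
  then show ?case using W_add_pi Suc by simp
qed simp

lemma W_reduce: "\<exists>y. 0 \<le> y \<and> y \<le> pi \<and> W x = W y"
proof -
  define n where "n = \<lfloor>x / pi\<rfloor>"
  define y where "y = x - n * pi"
  have "n \<le> x / pi" "x / pi < n + 1"
    unfolding n_def by linarith+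
  then have "0 \<le> y" "y \<le> pi"
    unfolding y_def by (auto simp: field_simps)
  moreover have "W x = W y"
  proof (cases "0 \<le> n")
    case True
    then have "x = y + real (nat n) * pi" unfolding y_def by simp
    then show ?thesis using W_add_nat_pi by simp
  next
    case False
    then have "y = x + real (nat (- n)) * pi" unfolding y_def by simp
    then show ?thesis using W_add_nat_pi by simp
  qed
  ultimately show ?thesis by blast
qed

lemma H_density_le: "tilde.H_density p \<le> 4 * (sin \<theta>\<^sub>c)\<^sup>2 * l1\<^sup>2 / c ^ 3"
proof -
  have "tilde.H_density p \<le> 4 * (sin \<theta>\<^sub>c)\<^sup>2 * B p / c ^ 3"
    using large_c.H_integrand_le[OF large_c_B tilde.cos_nonneg tilde.cos_le_1]
    by (simp add: tilde.H_density_def sin_squared_eq)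
  also have "\<dots> \<le> 4 * (sin \<theta>\<^sub>c)\<^sup>2 * l1\<^sup>2 / c ^ 3"
    using B_le c_pos by (intro divide_right_mono mult_left_mono) auto
  finally show ?thesis .
qed

text \<open>W vanishes at 0 and \<pi> and only has an upper bound on its derivative; this bounds
  it from both sides on [0, \<pi>], and periodicity does the rest.\<close>

lemma abs_W_le: "\<bar>W x\<bar> \<le> 4 * (sin \<theta>\<^sub>c)\<^sup>2 * l1\<^sup>2 / c ^ 3 * pi"
proof -
  define P where "P = 4 * (sin \<theta>\<^sub>c)\<^sup>2 * l1\<^sup>2 / c ^ 3"
  have P: "0 \<le> P" using c_pos by (simp add: P_def)
  obtain y where y: "0 \<le> y" "y \<le> pi" "W x = W y"
    using W_reduce by blast
  have "W y - W 0 \<le> P * (y - 0)"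
    by (rule primitive_increment_le[OF tilde.continuous_on_H_density _ y(1)])
       (simp add: H_density_le P_def)
  moreover have "W pi - W y \<le> P * (pi - y)"
    by (rule primitive_increment_le[OF tilde.continuous_on_H_density _ y(2)])
       (simp add: H_density_le P_def)
  moreover have "P * y \<le> P * pi" "0 \<le> P * y"
    using y P by (auto intro: mult_left_mono)
  ultimately have "\<bar>W y\<bar> \<le> P * pi"
    using W_pi by (simp add: abs_le_iff algebra_simps)
  then show ?thesis using y P_def by simp
qed

lemma sin_theta_tilde: "0 < sin \<theta>\<^sub>c" "sin \<theta>\<^sub>c \<le> 1"
  using theta_tilde(1,2) pi_gt_zero by (auto intro!: sin_gt_zero)

lemma Dc_theta_tilde: "0 < tilde.D" "tilde.D = sin \<theta>\<^sub>c / c"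
  using sin_theta_tilde c_pos by (auto simp: Dc_def)

text \<open>On the plane x3 = 0 one has D v = G(u), so D A = W(\<phi>(u)), which is small.\<close>

lemma abs_hyperbolic_argument_le:
  assumes "snd (snd (Xmap l1 l2 c \<theta>\<^sub>c z)) = 0"
  shows "\<bar>fcat l1 l2 c \<theta>\<^sub>c (Re z) + c * Im z\<bar> \<le> 1"
proof -
  define A where "A = fcat l1 l2 c \<theta>\<^sub>c (Re z) + c * Im z"
  define s where "s = sin \<theta>\<^sub>c"
  have s: "0 < s" "s \<le> 1" and D: "tilde.D = s / c"
    using sin_theta_tilde Dc_theta_tilde s_def by auto
  have "l1 * l2 * (Gcat l1 l2 c \<theta>\<^sub>c (Re z) - tilde.D * Im z) = 0"
    using assms by (simp add: Xmap_def Let_def algebra_simps)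
  then have "tilde.D * Im z = Gcat l1 l2 c \<theta>\<^sub>c (Re z)"
    using l1_pos l2_pos by simp
  then have "tilde.D * A = W (tilde.solution (Re z))"
    using tilde.fcat_Gcat_combination_eq[of "Re z"] by (simp add: A_def algebra_simps)
  then have "tilde.D * \<bar>A\<bar> \<le> 4 * s\<^sup>2 * l1\<^sup>2 / c ^ 3 * pi"
    using abs_W_le Dc_theta_tilde(1) by (metis abs_mult abs_of_pos s_def)
  also have "\<dots> = tilde.D * (s * (4 * pi * l1\<^sup>2) / c\<^sup>2)"
    using c_pos by (simp add: D power2_eq_square power3_eq_cube field_simps)
  also have "\<dots> \<le> tilde.D * 1"
  proof (rule mult_left_mono)
    have "s * (4 * pi * l1\<^sup>2) \<le> 1 * c\<^sup>2"
      using s c_large by (intro mult_mono) auto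
    then show "s * (4 * pi * l1\<^sup>2) / c\<^sup>2 \<le> 1"
      using c_pos by simp
  qed (use Dc_theta_tilde in simp)
  finally show ?thesis
    using Dc_theta_tilde(1) by (simp add: A_def)
qed

lemma Dc_theta_tilde_le: "tilde.D \<le> 1 / c"
  using sin_theta_tilde Dc_theta_tilde c_pos by (simp add: divide_right_mono)

lemma l1_l2_Dc_le: "l1 * l2 * tilde.D \<le> c"
proof -
  have "l1 * l2 * tilde.D \<le> l1\<^sup>2 * (1 / c)"
    using l2_le_l1 l2_pos Dc_theta_tilde(1) Dc_theta_tilde_le
    by (intro mult_mono) (auto simp: power2_eq_square)
  also have "\<dots> \<le> c"
  proof -
    have "l1\<^sup>2 \<le> c * c" using l1_sq_le_c_sq by (simp add: power2_eq_square)
    then show ?thesis using c_pos by (simp add: field_simps)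
  qed
  finally show ?thesis .
qed

lemma abs_Dc_Bfun_le: "\<bar>tilde.D * Bfun l1 l2 c \<theta>\<^sub>c u\<bar> \<le> 3 * l1\<^sup>2 / c"
proof -
  have "\<bar>tilde.D * Bfun l1 l2 c \<theta>\<^sub>c u\<bar> = tilde.D * B (tilde.solution u)"
    using Dc_theta_tilde(1) B_pos[of "tilde.solution u"] by (simp add: tilde.Bfun_eq abs_mult)
  also have "\<dots> \<le> (1 / c) * l1\<^sup>2"
    using Dc_theta_tilde(1) Dc_theta_tilde_le B_le less_imp_le[OF B_pos] c_pos
    by (intro mult_mono) auto
  also have "\<dots> \<le> 3 * l1\<^sup>2 / c"
    using c_pos by (simp add: divide_right_mono)
  finally show ?thesis .
qed

lemma abs_c_minus_phid_le: "\<bar>c - phid l1 l2 c \<theta>\<^sub>c u\<bar> \<le> 3 * l1\<^sup>2 / c"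
proof -
  have "\<bar>c - phid l1 l2 c \<theta>\<^sub>c u\<bar> \<le> 3 * B (tilde.solution u) / c"
    using large_c.abs_c_minus_speed_le[OF large_c_B tilde.cos_nonneg tilde.cos_le_1]
    by (simp add: tilde.phid_eq tilde.phi_rhs_eq)
  also have "\<dots> \<le> 3 * l1\<^sup>2 / c"
    using B_le c_pos by (simp add: divide_right_mono)
  finally show ?thesis .
qed

lemma normalizer_ge: "c\<^sup>2 * l2\<^sup>2 \<le> (c\<^sup>2 + l1\<^sup>2 * l2\<^sup>2 * tilde.D\<^sup>2) * Bfun l1 l2 c \<theta>\<^sub>c u"
  using B_ge by (intro mult_mono) (auto simp: tilde.Bfun_eq)

lemma abs_mult_cosh_1_le:
  assumes "\<bar>w\<bar> \<le> cosh 1"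
  shows "\<bar>c * w\<bar> \<le> cosh 1 * c" and "\<bar>l1 * l2 * tilde.D * w\<bar> \<le> cosh 1 * c"
proof -
  show "\<bar>c * w\<bar> \<le> cosh 1 * c"
    using assms c_pos by (simp add: abs_mult mult.commute)
  have "(l1 * l2 * tilde.D) * \<bar>w\<bar> \<le> c * cosh 1"
    using assms l1_l2_Dc_le c_pos by (intro mult_mono) auto
  then show "\<bar>l1 * l2 * tilde.D * w\<bar> \<le> cosh 1 * c"
    using l1_pos l2_pos Dc_theta_tilde(1) by (simp add: abs_mult mult.commute)
qed

lemma Gamma_coordinates_le:
  assumes "snd (snd (Xmap l1 l2 c \<theta>\<^sub>c z)) = 0"
  shows "\<bar>fst (Xmap l1 l2 c \<theta>\<^sub>c z)\<bar> \<le> radius_const l1 l2 / c\<^sup>2"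
    and "\<bar>fst (snd (Xmap l1 l2 c \<theta>\<^sub>c z))\<bar> \<le> radius_const l1 l2 / c\<^sup>2"
proof -
  define u where "u = Re z"
  define ph where "ph = phi l1 l2 c \<theta>\<^sub>c u"
  define ph' where "ph' = phid l1 l2 c \<theta>\<^sub>c u"
  define f' where "f' = tilde.D * Bfun l1 l2 c \<theta>\<^sub>c u"
  define x3 where "x3 = - l1 * l2 * tilde.D * Im z + l1 * l2 * Gcat l1 l2 c \<theta>\<^sub>c u"
  define A where "A = fcat l1 l2 c \<theta>\<^sub>c u + c * Im z"
  define M1 where "M1 = c * cos x3 * cosh A - l1 * l2 * tilde.D * sin x3 * sinh A"
  define M2 where "M2 = c * cos x3 * sinh A - l1 * l2 * tilde.D * sin x3 * cosh A"
  define M3 where "M3 = c * sin x3 * sinh A + l1 * l2 * tilde.D * cos x3 * cosh A"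
  define M4 where "M4 = c * sin x3 * cosh A + l1 * l2 * tilde.D * cos x3 * sinh A"
  define N where "N = (c\<^sup>2 + l1\<^sup>2 * l2\<^sup>2 * tilde.D\<^sup>2) * Bfun l1 l2 c \<theta>\<^sub>c u"
  have X: "Xmap l1 l2 c \<theta>\<^sub>c z =
    (- (1 / N) * ((1 / l1) * f' * cos ph * M1 - (1 / l1) * (c - ph') * sin ph * M2
                  - (1 / l2) * (c - ph') * cos ph * M3 - (1 / l2) * f' * sin ph * M4),
     - (1 / N) * ((1 / l1) * f' * cos ph * M4 - (1 / l1) * (c - ph') * sin ph * M3
                  + (1 / l2) * (c - ph') * cos ph * M2 + (1 / l2) * f' * sin ph * M1),
     x3)"
    unfolding Xmap_def Let_def x3_def N_def M1_def M2_def M3_def M4_def A_def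
      f'_def ph'_def ph_def u_def ..
  have "x3 = 0" using assms X by simp
  have A: "\<bar>cosh A\<bar> \<le> cosh 1" "\<bar>sinh A\<bar> \<le> cosh 1"
    using abs_cosh_sinh_le abs_hyperbolic_argument_le[OF assms] by (auto simp: A_def u_def)
  have M: "\<bar>M1\<bar> \<le> cosh 1 * c" "\<bar>M2\<bar> \<le> cosh 1 * c"
      "\<bar>M3\<bar> \<le> cosh 1 * c" "\<bar>M4\<bar> \<le> cosh 1 * c"
    using abs_mult_cosh_1_le[OF A(1)] abs_mult_cosh_1_le[OF A(2)]
    by (simp_all add: M1_def M2_def M3_def M4_def \<open>x3 = 0\<close>)
  have f': "\<bar>f'\<bar> \<le> 3 * l1\<^sup>2 / c"
    using abs_Dc_Bfun_le by (simp add: f'_def)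
  have ph': "\<bar>c - ph'\<bar> \<le> 3 * l1\<^sup>2 / c"
    using abs_c_minus_phid_le by (simp add: ph'_def)
  have N: "c\<^sup>2 * l2\<^sup>2 \<le> N"
    using normalizer_ge by (simp add: N_def)
  have n: "0 < c\<^sup>2 * l2\<^sup>2"
    using c_pos l2_pos by simp
  have R: "4 * (3 * l1\<^sup>2 / c) * (cosh 1 * c) / (l2 * (c\<^sup>2 * l2\<^sup>2)) = radius_const l1 l2 / c\<^sup>2"
    using c_pos l2_pos by (simp add: radius_const_def field_simps power2_eq_square power3_eq_cube)
  show "\<bar>fst (Xmap l1 l2 c \<theta>\<^sub>c z)\<bar> \<le> radius_const l1 l2 / c\<^sup>2"
    and "\<bar>fst (snd (Xmap l1 l2 c \<theta>\<^sub>c z))\<bar> \<le> radius_const l1 l2 / c\<^sup>2"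
    using abs_frame_combination_le[OF l2_pos l2_le_l1 f' ph' M n N, of ph]
    unfolding X R by simp_all
qed

lemma Gamma_radius_le:
  assumes "p \<in> Gamma l1 l2 c"
  shows "(\<lambda>(x1, x2, x3). sqrt (x1\<^sup>2 + x2\<^sup>2)) p \<le> 2 * radius_const l1 l2 / c\<^sup>2"
proof -
  obtain z where p: "p = Xmap l1 l2 c \<theta>\<^sub>c z" and "snd (snd p) = 0"
    using assms unfolding Gamma_def catenoid_def by auto
  then have "\<bar>fst p\<bar> \<le> radius_const l1 l2 / c\<^sup>2" "\<bar>fst (snd p)\<bar> \<le> radius_const l1 l2 / c\<^sup>2"
    using Gamma_coordinates_le by auto
  moreover have "sqrt ((fst p)\<^sup>2 + (fst (snd p))\<^sup>2) \<le> \<bar>fst p\<bar> + \<bar>fst (snd p)\<bar>"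
    by (rule sqrt_sum_squares_le_sum_abs)
  ultimately show ?thesis
    by (simp add: case_prod_beta)
qed

lemma Xmap_0_in_Gamma: "Xmap l1 l2 c \<theta>\<^sub>c 0 \<in> Gamma l1 l2 c"
proof -
  have "Gcat l1 l2 c \<theta>\<^sub>c 0 = 0"
    using tilde.Gcat_eq[of 0] by simp
  then have "snd (snd (Xmap l1 l2 c \<theta>\<^sub>c 0)) = 0"
    by (simp add: Xmap_def Let_def)
  then show ?thesis
    unfolding Gamma_def catenoid_def by auto
qed

lemma Gamma_radius_Sup:
  "bdd_above ((\<lambda>(x1, x2, x3). sqrt (x1\<^sup>2 + x2\<^sup>2)) ` Gamma l1 l2 c)
   \<and> 0 \<le> (SUP (x1, x2, x3)\<in>Gamma l1 l2 c. sqrt (x1\<^sup>2 + x2\<^sup>2))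
   \<and> (SUP (x1, x2, x3)\<in>Gamma l1 l2 c. sqrt (x1\<^sup>2 + x2\<^sup>2)) \<le> 2 * radius_const l1 l2 / c\<^sup>2"
proof (intro conjI)
  let ?r = "\<lambda>(x1, x2, x3). sqrt (x1\<^sup>2 + x2\<^sup>2)" and ?p0 = "Xmap l1 l2 c \<theta>\<^sub>c 0"
  show bdd: "bdd_above (?r ` Gamma l1 l2 c)"
    using Gamma_radius_le by (rule bdd_aboveI2)
  have "0 \<le> ?r ?p0" by (simp add: case_prod_beta)
  also have "?r ?p0 \<le> Sup (?r ` Gamma l1 l2 c)"
    by (rule cSUP_upper[OF Xmap_0_in_Gamma bdd])
  finally show "0 \<le> Sup (?r ` Gamma l1 l2 c)" .
  show "Sup (?r ` Gamma l1 l2 c) \<le> 2 * radius_const l1 l2 / c\<^sup>2"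
    using Xmap_0_in_Gamma Gamma_radius_le by (intro cSUP_least) auto
qed

end

lemma eventually_large_parameter:
  assumes "0 < l2" "l2 \<le> l1"
  shows "\<forall>\<^sub>F c in at_top. large_parameter l1 l2 c"
  using eventually_ge_at_top[of "1 + 4 * pi * l1\<^sup>2"]
proof (rule eventually_mono)
  fix c :: real
  assume c: "1 + 4 * pi * l1\<^sup>2 \<le> c"
  then have "1 \<le> c" by (smt (verit) pi_gt_zero zero_le_power2 mult_nonneg_nonneg)
  then have "c \<le> c\<^sup>2" by (simp add: power2_eq_square)
  then show "large_parameter l1 l2 c"
    using assms c \<open>1 \<le> c\<close> by unfold_locales auto
qed

theorem proposition6p2:
  fixes l1 l2 :: real
  assumes "(l1 > l2 \<and> l2 > 0) \<or> (l1 = 1 \<and> l2 = 1)"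
  shows "(\<forall>\<^sub>F c in at_top.
            bdd_above ((\<lambda>(x1, x2, x3). sqrt (x1\<^sup>2 + x2\<^sup>2)) ` Gamma l1 l2 c))
       \<and> ((\<lambda>c. SUP (x1, x2, x3)\<in>Gamma l1 l2 c. sqrt (x1\<^sup>2 + x2\<^sup>2)) \<longlongrightarrow> 0) at_top"
proof -
  have "0 < l2" "l2 \<le> l1" using assms by auto
  then have bounds: "\<forall>\<^sub>F c in at_top.
      bdd_above ((\<lambda>(x1, x2, x3). sqrt (x1\<^sup>2 + x2\<^sup>2)) ` Gamma l1 l2 c)
      \<and> 0 \<le> (SUP (x1, x2, x3)\<in>Gamma l1 l2 c. sqrt (x1\<^sup>2 + x2\<^sup>2))
      \<and> (SUP (x1, x2, x3)\<in>Gamma l1 l2 c. sqrt (x1\<^sup>2 + x2\<^sup>2)) \<le> 2 * radius_const l1 l2 / c\<^sup>2"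
    by (rule eventually_mono[OF eventually_large_parameter]) (rule large_parameter.Gamma_radius_Sup)
  have "((\<lambda>c::real. 2 * radius_const l1 l2 / c\<^sup>2) \<longlongrightarrow> 0) at_top"
    by (intro tendsto_divide_0[OF tendsto_const] filterlim_at_top_imp_at_infinity
        filterlim_pow_at_top filterlim_ident) simp
  then show ?thesis
    using bounds by (auto elim: eventually_mono intro: tendsto_sandwich[OF _ _ tendsto_const])
qed

end
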